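(* Let $\mathcal{H}$ be a complex infinite-dimensional Hilbert space, let $n>1$ be an integer, and let $A\in B(\mathcal{H})$ satisfy $A^*A^n=A^nA^*$ (equivalently, $A^n$ is normal). Then $A$ is isoloid, i.e. every isolated point of $\sigma(A)$ is an eigenvalue of $A$.
   Context: $B(\mathcal{H})$ denotes the algebra of bounded linear operators on $\mathcal{H}$; $\sigma(A)$ is the spectrum of $A$. *)

theory Defs
  imports "HOL-Analysis.Analysis"
begin

definition hnorm :: "('a \<Rightarrow> 'a \<Rightarrow> complex) \<Rightarrow> 'a \<Rightarrow> real" where
  "hnorm ip x = sqrt (Re (ip x x))"

definition chilbert :: "(complex \<Rightarrow> 'a::ab_group_add \<Rightarrow> 'a) \<Rightarrow> ('a \<Rightarrow> 'a \<Rightarrow> complex) \<Rightarrow> bool" where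
  "chilbert sc ip \<longleftrightarrow>
     (\<forall>x. sc 1 x = x) \<and>
     (\<forall>a b x. sc a (sc b x) = sc (a * b) x) \<and>
     (\<forall>a b x. sc (a + b) x = sc a x + sc b x) \<and>
     (\<forall>a x y. sc a (x + y) = sc a x + sc a y) \<and>
     (\<forall>x y z. ip (x + y) z = ip x z + ip y z) \<and>
     (\<forall>a x y. ip (sc a x) y = a * ip x y) \<and>
     (\<forall>x y. ip y x = cnj (ip x y)) \<and>
     (\<forall>x. x \<noteq> 0 \<longrightarrow> Re (ip x x) > 0) \<and>
     (\<forall>X::nat \<Rightarrow> 'a. (\<forall>e>0. \<exists>N. \<forall>m\<ge>N. \<forall>k\<ge>N. hnorm ip (X m - X k) < e)
        \<longrightarrow> (\<exists>L. (\<lambda>k. hnorm ip (X k - L)) \<longlonglongrightarrow> 0))"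

definition hinfdim :: "(complex \<Rightarrow> 'a::ab_group_add \<Rightarrow> 'a) \<Rightarrow> bool" where
  "hinfdim sc \<longleftrightarrow> \<not> (\<exists>B. finite B \<and> (\<forall>x. \<exists>c. x = (\<Sum>b\<in>B. sc (c b) b)))"

definition hbounded :: "(complex \<Rightarrow> 'a::ab_group_add \<Rightarrow> 'a) \<Rightarrow> ('a \<Rightarrow> 'a \<Rightarrow> complex) \<Rightarrow> ('a \<Rightarrow> 'a) \<Rightarrow> bool" where
  "hbounded sc ip A \<longleftrightarrow>
     (\<forall>x y. A (x + y) = A x + A y) \<and> (\<forall>a x. A (sc a x) = sc a (A x)) \<and>
     (\<exists>K. \<forall>x. hnorm ip (A x) \<le> K * hnorm ip x)"

definition hadj :: "('a \<Rightarrow> 'a \<Rightarrow> complex) \<Rightarrow> ('a \<Rightarrow> 'a) \<Rightarrow> ('a \<Rightarrow> 'a)" where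
  "hadj ip A = (THE B. \<forall>x y. ip (A x) y = ip x (B y))"

definition hspectrum :: "(complex \<Rightarrow> 'a::ab_group_add \<Rightarrow> 'a) \<Rightarrow> ('a \<Rightarrow> 'a \<Rightarrow> complex) \<Rightarrow> ('a \<Rightarrow> 'a) \<Rightarrow> complex set" where
  "hspectrum sc ip A = {l. \<not> (\<exists>B. hbounded sc ip B \<and>
       (\<forall>x. B (A x - sc l x) = x) \<and> (\<forall>x. A (B x) - sc l (B x) = x))}"

definition heigenvalue :: "(complex \<Rightarrow> 'a::ab_group_add \<Rightarrow> 'a) \<Rightarrow> ('a \<Rightarrow> 'a) \<Rightarrow> complex \<Rightarrow> bool" where
  "heigenvalue sc A l \<longleftrightarrow> (\<exists>x. x \<noteq> 0 \<and> A x = sc l x)"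

definition isoloid :: "(complex \<Rightarrow> 'a::ab_group_add \<Rightarrow> 'a) \<Rightarrow> ('a \<Rightarrow> 'a \<Rightarrow> complex) \<Rightarrow> ('a \<Rightarrow> 'a) \<Rightarrow> bool" where
  "isoloid sc ip A \<longleftrightarrow> (\<forall>l. l isolated_in hspectrum sc ip A \<longrightarrow> heigenvalue sc A l)"

end

theory Submission
  imports Defs "HOL-Complex_Analysis.Complex_Analysis"
begin

text \<open>
  Let \<open>l\<close> be an isolated point of the spectrum of \<open>A\<close> and \<open>P\<close> the Riesz projection at \<open>l\<close>, obtained
  from the residues at \<open>l\<close> of \<open>z \<mapsto> \<langle>(A - z)\<^sup>-\<^sup>1 u, w\<rangle>\<close> and the Riesz representation theorem.
  If \<open>P = 0\<close>, Cauchy's formula bounds the resolvent near \<open>l\<close>, and \<open>l\<close> would not be in the spectrum;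
  so \<open>P u \<noteq> 0\<close> for some \<open>u\<close>. Estimating the contour integral over small circles shows that
  \<open>\<parallel>g(A)\<^sup>k P u\<parallel>\<close> decays faster than any geometric sequence whenever \<open>g(l) = 0\<close>.
  For \<open>g(z) = z\<^sup>n - l\<^sup>n\<close> the operator \<open>N = g(A)\<close> is normal, so \<open>k \<mapsto> \<parallel>N\<^sup>k x\<parallel>\<close> is log-convex and
  cannot decay that fast unless \<open>N x = 0\<close>; hence \<open>(A\<^sup>n - l\<^sup>n) P u = 0\<close>. Writing \<open>g = (z - l)\<^sup>m h\<close> with
  \<open>h(l) \<noteq> 0\<close>, the same decay argument gives \<open>h(A) P u \<noteq> 0\<close>, and the last non-zero vector among
  \<open>(A - l)\<^sup>j h(A) P u\<close> is an eigenvector for \<open>l\<close>.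
\<close>

lemma locally_bounded_on_compact:
  fixes S :: "'b::metric_space set" and Q :: "'b \<Rightarrow> real \<Rightarrow> bool"
  assumes "compact S"
    and local: "\<And>x. x \<in> S \<Longrightarrow> \<exists>e>0. \<exists>M. \<forall>y\<in>S. dist y x < e \<longrightarrow> Q y M"
    and mono: "\<And>y M M'. Q y M \<Longrightarrow> M \<le> M' \<Longrightarrow> Q y M'"
  obtains M where "\<And>y. y \<in> S \<Longrightarrow> Q y M"
proof -
  obtain E Mx where EM: "\<And>x. x \<in> S \<Longrightarrow> E x > 0 \<and> (\<forall>y\<in>S. dist y x < E x \<longrightarrow> Q y (Mx x))"
    using local by metis
  have "S \<subseteq> (\<Union>x\<in>S. ball x (E x))" using EM by force
  then obtain C where C: "C \<subseteq> S" "finite C" "S \<subseteq> (\<Union>c\<in>C. ball c (E c))"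
    using compactE_image[OF assms(1), of S "\<lambda>x. ball x (E x)"] by blast
  have "Q y (Max (insert 0 (Mx ` C)))" if "y \<in> S" for y
  proof -
    obtain c where c: "c \<in> C" "y \<in> ball c (E c)" using C(3) \<open>y \<in> S\<close> by blast
    have "Q y (Mx c)" using EM[of c] c C(1) \<open>y \<in> S\<close> by (auto simp: dist_commute)
    then show ?thesis by (rule mono) (use C(2) c(1) in auto)
  qed
  then show ?thesis by (rule that)
qed

lemma poly_bounded_near:
  fixes p :: "complex poly"
  obtains C where "C \<ge> 0" "\<And>z. cmod (z - a) \<le> 1 \<Longrightarrow> cmod (poly p z) \<le> C"
proof -
  have "compact (poly p ` cball a 1)"
    by (intro compact_continuous_image continuous_on_poly continuous_on_id) simp
  then obtain C where C: "\<forall>y\<in>poly p ` cball a 1. norm y \<le> C"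
    using compact_imp_bounded bounded_iff by blast
  show ?thesis
    by (rule that[of "max C 0"])
      (use C in \<open>auto simp: dist_norm norm_minus_commute intro: le_max_iff_disj[THEN iffD2]\<close>)
qed

lemma log_convex_seq_lower_bound:
  fixes s :: "nat \<Rightarrow> real"
  assumes nonneg: "\<And>k. s k \<ge> 0" and log_convex: "\<And>k. (s (Suc k))\<^sup>2 \<le> s (Suc (Suc k)) * s k"
    and "s 0 > 0" "s 1 > 0"
  shows "s k \<ge> (s 1 / s 0) ^ k * s 0"
proof -
  have ratio_mono: "s k > 0 \<and> s 1 * s k \<le> s (Suc k) * s 0" for k
  proof (induction k)
    case 0 then show ?case using \<open>s 0 > 0\<close> by simp
  next
    case (Suc k)
    then have pos: "s k > 0" and ratio: "s 1 * s k \<le> s (Suc k) * s 0" by auto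
    have "0 < s 1 * s k" using \<open>s 1 > 0\<close> pos by simp
    then have pos': "s (Suc k) > 0"
      using ratio \<open>s 0 > 0\<close> nonneg[of "Suc k"] by (smt (verit) mult_nonpos_nonneg)
    have "s (Suc k) * (s 1 * s k) \<le> s (Suc k) * (s (Suc k) * s 0)"
      using ratio pos' by (intro mult_left_mono) auto
    also have "\<dots> \<le> s (Suc (Suc k)) * s k * s 0"
      using mult_right_mono[OF log_convex[of k] less_imp_le[OF \<open>s 0 > 0\<close>]]
      by (simp add: power2_eq_square mult.assoc)
    finally have "s 1 * s (Suc k) * s k \<le> s (Suc (Suc k)) * s 0 * s k"
      by (simp add: algebra_simps)
    then show ?case using pos pos' by simp
  qed
  show ?thesis
  proof (induction k)
    case (Suc k)
    have "(s 1 / s 0) ^ Suc k * s 0 = (s 1 / s 0) * ((s 1 / s 0) ^ k * s 0)" by simp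
    also have "\<dots> \<le> (s 1 / s 0) * s k"
      using Suc \<open>s 0 > 0\<close> \<open>s 1 > 0\<close> by (intro mult_left_mono) auto
    also have "\<dots> \<le> s (Suc k)" using ratio_mono[of k] \<open>s 0 > 0\<close> by (simp add: field_simps)
    finally show ?case .
  qed simp
qed

lemma nonpos_if_times_pow2_bounded:
  fixes c :: real
  assumes "\<And>k. c * 2 ^ k \<le> C"
  shows "c \<le> 0"
proof (rule ccontr)
  assume "\<not> c \<le> 0"
  obtain k where "C / c < 2 ^ k" using real_arch_pow[of 2 "C / c"] by auto
  then show False using assms[of k] \<open>\<not> c \<le> 0\<close> by (simp add: field_simps)
qed

lemma monomial_power_minus_const_nonzero:
  fixes c :: complex
  assumes "n > 0"
  shows "[:0, 1:] ^ n - [:c:] \<noteq> 0"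
proof -
  obtain m where "n = Suc m" using assms by (cases n) auto
  then have "coeff ([:0, 1:] ^ n - [:c:]) n = 1"
    by (simp add: coeff_linear_power[of 0, simplified])
  then show ?thesis by auto
qed

section \<open>Hilbert space geometry\<close>

locale complex_hilbert =
  fixes sc :: "complex \<Rightarrow> 'a::ab_group_add \<Rightarrow> 'a" and ip :: "'a \<Rightarrow> 'a \<Rightarrow> complex"
  assumes chilbert: "chilbert sc ip"
begin

abbreviation nm :: "'a \<Rightarrow> real" where "nm \<equiv> hnorm ip"

lemma sc_one [simp]: "sc 1 x = x"
  and sc_sc [simp]: "sc a (sc b x) = sc (a * b) x"
  and sc_add_left: "sc (a + b) x = sc a x + sc b x"
  and sc_add_right: "sc a (x + y) = sc a x + sc a y"
  and ip_add_left: "ip (x + y) z = ip x z + ip y z"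
  and ip_sc_left [simp]: "ip (sc a x) y = a * ip x y"
  and ip_commute: "ip y x = cnj (ip x y)"
  and ip_self_pos: "x \<noteq> 0 \<Longrightarrow> Re (ip x x) > 0"
  using chilbert unfolding chilbert_def by meson+

lemma complete:
  assumes "\<forall>e>0. \<exists>N. \<forall>m\<ge>N. \<forall>k\<ge>N. nm (X m - X k) < e"
  obtains L where "(\<lambda>k. nm (X k - L)) \<longlonglongrightarrow> 0"
proof -
  have "\<forall>X::nat \<Rightarrow> 'a. (\<forall>e>0. \<exists>N. \<forall>m\<ge>N. \<forall>k\<ge>N. nm (X m - X k) < e)
      \<longrightarrow> (\<exists>L. (\<lambda>k. nm (X k - L)) \<longlonglongrightarrow> 0)"
    using chilbert unfolding chilbert_def by (elim conjE) assumption
  then show ?thesis using assms that by blast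
qed

lemma sc_zero_left [simp]: "sc 0 x = 0"
  using sc_add_left[of 0 0 x] by simp

lemma sc_zero_right [simp]: "sc a 0 = 0"
  using sc_add_right[of a 0 0] by simp

lemma sc_minus_right: "sc a (- x) = - sc a x"
  using sc_add_right[of a x "- x"] by (simp add: eq_neg_iff_add_eq_0 add.commute)

lemma sc_minus_left: "sc (- a) x = - sc a x"
  using sc_add_left[of a "- a" x] by (simp add: eq_neg_iff_add_eq_0 add.commute)

lemma sc_diff_right: "sc a (x - y) = sc a x - sc a y"
  using sc_add_right[of a x "- y"] by (simp add: sc_minus_right)

lemma sc_diff_left: "sc (a - b) x = sc a x - sc b x"
  using sc_add_left[of a "- b" x] by (simp add: sc_minus_left)

lemmas sc_simps = sc_add_left sc_add_right sc_minus_left sc_minus_right sc_diff_left sc_diff_right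

lemma ip_zero_left [simp]: "ip 0 y = 0"
  using ip_add_left[of 0 0 y] by simp

lemma ip_minus_left: "ip (- x) y = - ip x y"
  using ip_add_left[of x "- x" y] by (simp add: eq_neg_iff_add_eq_0 add.commute)

lemma ip_diff_left: "ip (x - y) z = ip x z - ip y z"
  using ip_add_left[of x "- y" z] by (simp add: ip_minus_left)

lemma ip_add_right: "ip x (y + z) = ip x y + ip x z"
  by (metis ip_commute ip_add_left complex_cnj_add)

lemma ip_sc_right [simp]: "ip x (sc a y) = cnj a * ip x y"
  by (metis ip_commute ip_sc_left complex_cnj_mult)

lemma ip_zero_right [simp]: "ip x 0 = 0"
  by (metis ip_commute ip_zero_left complex_cnj_zero)

lemma ip_minus_right: "ip x (- y) = - ip x y"
  by (metis ip_commute ip_minus_left complex_cnj_minus)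

lemma ip_diff_right: "ip x (y - z) = ip x y - ip x z"
  by (metis ip_commute ip_diff_left complex_cnj_diff)

lemmas ip_simps = ip_add_left ip_add_right ip_minus_left ip_minus_right ip_diff_left ip_diff_right

lemma ip_self_nonneg: "Re (ip x x) \<ge> 0"
  using ip_self_pos[of x] by (cases "x = 0") auto

lemma ip_self_eq_0_iff [simp]: "ip x x = 0 \<longleftrightarrow> x = 0"
  using ip_self_pos[of x] by (cases "x = 0") auto

lemma power2_nm: "(nm x)\<^sup>2 = Re (ip x x)"
  by (simp add: hnorm_def ip_self_nonneg)

lemma ip_self_eq_nm: "ip x x = complex_of_real ((nm x)\<^sup>2)"
  using ip_commute[of x x] by (simp add: power2_nm complex_eq_iff)

lemma nm_nonneg [simp]: "nm x \<ge> 0"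
  by (simp add: hnorm_def ip_self_nonneg)

lemma nm_eq_0_iff [simp]: "nm x = 0 \<longleftrightarrow> x = 0"
  using ip_self_pos[of x] by (cases "x = 0") (auto simp: hnorm_def)

lemma nm_zero [simp]: "nm 0 = 0"
  by simp

lemma nm_le_zero_iff [simp]: "nm x \<le> 0 \<longleftrightarrow> x = 0"
  using nm_nonneg[of x] nm_eq_0_iff[of x] by linarith

lemma zero_less_nm_iff [simp]: "0 < nm x \<longleftrightarrow> x \<noteq> 0"
  using nm_nonneg[of x] nm_eq_0_iff[of x] by linarith

lemma nm_sc: "nm (sc a x) = cmod a * nm x"
proof -
  have Re_of_real_mult: "Re (complex_of_real r * z) = r * Re z" for r z by simp
  have "ip (sc a x) (sc a x) = (a * cnj a) * ip x x" by simp
  also have "\<dots> = complex_of_real ((cmod a)\<^sup>2) * ip x x" by (simp only: complex_norm_square)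
  finally have "Re (ip (sc a x) (sc a x)) = (cmod a)\<^sup>2 * Re (ip x x)"
    using Re_of_real_mult by (simp only:)
  then have "(nm (sc a x))\<^sup>2 = (cmod a * nm x)\<^sup>2"
    by (simp add: power2_nm power_mult_distrib)
  then show ?thesis by (simp add: power2_eq_iff_nonneg)
qed

lemma nm_minus_commute: "nm (x - y) = nm (y - x)"
  using nm_sc[of "- 1" "x - y"] by (simp add: sc_minus_left)

lemma nm_sub_projection:
  assumes "z \<noteq> 0"
  shows "(nm (y - sc (ip y z / ip z z) z))\<^sup>2 = (nm y)\<^sup>2 - (cmod (ip y z))\<^sup>2 / (nm z)\<^sup>2"
proof -
  have zz: "ip z z = complex_of_real ((nm z)\<^sup>2)" "(nm z)\<^sup>2 > 0"
    using assms by (simp_all add: ip_self_eq_nm)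
  define c where "c = ip y z"
  define t where "t = c / ip z z"
  have "ip (y - sc t z) (y - sc t z) = ip y y - cnj t * c - t * cnj c + t * cnj t * ip z z"
    by (simp add: ip_simps c_def algebra_simps ip_commute[of z y])
  also have "\<dots> = ip y y - c * cnj c / ip z z"
    using zz by (simp add: t_def field_simps)
  also have "\<dots> = ip y y - complex_of_real ((cmod c)\<^sup>2 / (nm z)\<^sup>2)"
    by (simp only: zz(1) complex_norm_square of_real_divide)
  finally have "Re (ip (y - sc t z) (y - sc t z)) = Re (ip y y) - (cmod c)\<^sup>2 / (nm z)\<^sup>2"
    by simp
  then show ?thesis
    unfolding t_def c_def power2_nm[of y] power2_nm[of "y - sc (ip y z / ip z z) z"] .
qed

lemma Cauchy_Schwarz: "cmod (ip x y) \<le> nm x * nm y"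
proof (cases "y = 0")
  case False
  have "(cmod (ip x y))\<^sup>2 / (nm y)\<^sup>2 \<le> (nm x)\<^sup>2"
    using nm_sub_projection[OF False, of x] zero_le_power2[of "nm (x - sc (ip x y / ip y y) y)"]
    by linarith
  moreover have "0 < (nm y)\<^sup>2" using False by simp
  ultimately have "(cmod (ip x y))\<^sup>2 \<le> (nm x * nm y)\<^sup>2"
    by (simp add: pos_divide_le_eq power_mult_distrib)
  then show ?thesis by (rule power2_le_imp_le) simp
qed simp

lemma nm_triangle: "nm (x + y) \<le> nm x + nm y"
proof -
  have "(nm (x + y))\<^sup>2 = (nm x)\<^sup>2 + 2 * Re (ip x y) + (nm y)\<^sup>2"
    by (simp add: power2_nm ip_simps ip_commute[of y x])
  also have "\<dots> \<le> (nm x + nm y)\<^sup>2"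
    using Cauchy_Schwarz[of x y] complex_Re_le_cmod[of "ip x y"]
    by (simp add: power2_eq_square algebra_simps)
  finally show ?thesis by (rule power2_le_imp_le) simp
qed

lemma nm_diff_triangle: "nm (x - z) \<le> nm (x - y) + nm (y - z)"
  using nm_triangle[of "x - y" "y - z"] by simp

lemma nm_diff_le: "nm (x - y) \<le> nm x + nm y"
  using nm_triangle[of x "- y"] nm_minus_commute[of 0 y] by simp

lemma parallelogram: "(nm (x + y))\<^sup>2 + (nm (x - y))\<^sup>2 = 2 * (nm x)\<^sup>2 + 2 * (nm y)\<^sup>2"
proof -
  have "ip (x + y) (x + y) + ip (x - y) (x - y) = 2 * ip x x + 2 * ip y y"
    by (simp add: ip_simps algebra_simps)
  from arg_cong[where f = Re, OF this] show ?thesis by (simp add: power2_nm)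
qed

lemma ip_eqI: "(\<And>w. ip x w = ip y w) \<Longrightarrow> x = y"
  using ip_self_eq_0_iff[of "x - y"] by (simp add: ip_diff_left)

lemma ip_eqI_right:
  assumes "\<And>w. ip w x = ip w y"
  shows "x = y"
proof (rule ip_eqI)
  fix w
  have "ip x w = cnj (ip w x)" by (rule ip_commute)
  also have "\<dots> = ip y w" using assms[of w] ip_commute[of w y] by simp
  finally show "ip x w = ip y w" .
qed

lemma nm_le_if_ip_le:
  assumes "C \<ge> 0" "\<And>w. cmod (ip x w) \<le> C * nm w"
  shows "nm x \<le> C"
proof (cases "x = 0")
  case False
  have "(nm x)\<^sup>2 \<le> C * nm x" using assms(2)[of x] by (simp add: ip_self_eq_nm norm_power)
  then show ?thesis using False by (simp add: power2_eq_square)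
qed (use assms in simp)

lemma convergent_if_dist_le_null:
  assumes "\<And>m k. nm (X m - X k) \<le> \<delta> m + \<delta> k" and "\<delta> \<longlonglongrightarrow> 0"
  obtains L where "(\<lambda>k. nm (X k - L)) \<longlonglongrightarrow> 0"
proof (rule complete)
  show "\<forall>e>0. \<exists>N. \<forall>m\<ge>N. \<forall>k\<ge>N. nm (X m - X k) < e"
  proof (intro allI impI)
    fix e :: real assume "e > 0"
    then obtain N where N: "\<And>k. k \<ge> N \<Longrightarrow> \<delta> k < e / 2"
      using LIMSEQ_D[OF \<open>\<delta> \<longlonglongrightarrow> 0\<close>, of "e / 2"] by force
    have "nm (X m - X k) < e" if "m \<ge> N" "k \<ge> N" for m k
      using assms(1)[of m k] N[OF \<open>m \<ge> N\<close>] N[OF \<open>k \<ge> N\<close>] by linarith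
    then show "\<exists>N. \<forall>m\<ge>N. \<forall>k\<ge>N. nm (X m - X k) < e" by blast
  qed
qed

lemma minimizing_sequence_convergent:
  assumes mid: "\<And>m k. d \<le> nm (x - sc (1 / 2) (Z m + Z k))" and "0 \<le> d"
    and near: "\<And>k. nm (x - Z k) \<le> d + \<epsilon> k"
    and \<epsilon>: "\<And>k. 0 \<le> \<epsilon> k" "\<And>k. \<epsilon> k \<le> 1" "\<epsilon> \<longlonglongrightarrow> 0"
  obtains y where "(\<lambda>k. nm (Z k - y)) \<longlonglongrightarrow> 0"
proof -
  have "(nm (Z m - Z k))\<^sup>2 \<le> 4 * (d + 1) * (\<epsilon> m + \<epsilon> k)" for m k
  proof -
    define c where "c = sc (1 / 2) (Z m + Z k)"
    have "(x - Z m) + (x - Z k) = sc 2 (x - c)"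
      unfolding c_def using sc_add_left[of 1 1] by (simp add: sc_simps algebra_simps)
    then have "(nm (Z m - Z k))\<^sup>2 = 2 * (nm (x - Z m))\<^sup>2 + 2 * (nm (x - Z k))\<^sup>2 - 4 * (nm (x - c))\<^sup>2"
      using parallelogram[of "x - Z m" "x - Z k"] by (simp add: nm_sc power_mult_distrib nm_minus_commute)
    moreover have "(nm (x - Z m))\<^sup>2 \<le> (d + \<epsilon> m)\<^sup>2" "(nm (x - Z k))\<^sup>2 \<le> (d + \<epsilon> k)\<^sup>2"
      by (intro power_mono near nm_nonneg)+
    moreover have "d\<^sup>2 \<le> (nm (x - c))\<^sup>2"
      using mid[of m k] \<open>0 \<le> d\<close> unfolding c_def by (intro power_mono) auto
    moreover have "(\<epsilon> m)\<^sup>2 \<le> \<epsilon> m" "(\<epsilon> k)\<^sup>2 \<le> \<epsilon> k"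
      using \<epsilon> by (auto simp: power2_eq_square mult_left_le_one_le)
    ultimately have "(nm (Z m - Z k))\<^sup>2 \<le> 2 * (d + \<epsilon> m)\<^sup>2 + 2 * (d + \<epsilon> k)\<^sup>2 - 4 * d\<^sup>2"
      by linarith
    also have "\<dots> = 4 * d * (\<epsilon> m + \<epsilon> k) + 2 * (\<epsilon> m)\<^sup>2 + 2 * (\<epsilon> k)\<^sup>2"
      by (simp add: power2_eq_square algebra_simps)
    also have "\<dots> \<le> 4 * (d + 1) * (\<epsilon> m + \<epsilon> k)"
      using \<open>(\<epsilon> m)\<^sup>2 \<le> \<epsilon> m\<close> \<open>(\<epsilon> k)\<^sup>2 \<le> \<epsilon> k\<close> \<epsilon>(1)[of m] \<epsilon>(1)[of k]
      by (simp add: algebra_simps)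
    finally show ?thesis .
  qed
  then have "nm (Z m - Z k) \<le> sqrt (4 * (d + 1) * \<epsilon> m) + sqrt (4 * (d + 1) * \<epsilon> k)" for m k
  proof -
    have "nm (Z m - Z k) \<le> sqrt (4 * (d + 1) * \<epsilon> m + 4 * (d + 1) * \<epsilon> k)"
      using \<open>(nm (Z m - Z k))\<^sup>2 \<le> _\<close> by (simp add: real_le_rsqrt distrib_left)
    also have "\<dots> \<le> sqrt (4 * (d + 1) * \<epsilon> m) + sqrt (4 * (d + 1) * \<epsilon> k)"
      using \<epsilon>(1)[of m] \<epsilon>(1)[of k] \<open>0 \<le> d\<close> by (intro sqrt_add_le_add_sqrt) auto
    finally show ?thesis .
  qed
  moreover have "(\<lambda>k. sqrt (4 * (d + 1) * \<epsilon> k)) \<longlonglongrightarrow> 0"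
    using tendsto_real_sqrt[OF tendsto_mult_right_zero[OF \<epsilon>(3), of "4 * (d + 1)"]] by simp
  ultimately show ?thesis
    using that by (rule convergent_if_dist_le_null)
qed

lemma nearest_point_in_kernel:
  fixes \<phi> :: "'a \<Rightarrow> complex"
  assumes add: "\<And>x y. \<phi> (x + y) = \<phi> x + \<phi> y" and scl: "\<And>a x. \<phi> (sc a x) = a * \<phi> x"
    and bounded: "\<And>x. cmod (\<phi> x) \<le> K * nm x"
  obtains y where "\<phi> y = 0" "\<And>z. \<phi> z = 0 \<Longrightarrow> nm (x - y) \<le> nm (x - z)"
proof -
  define D where "D = {nm (x - z) | z. \<phi> z = 0}"
  have "D \<noteq> {}" "bdd_below D" using scl[of 0 x] by (auto simp: D_def intro: bdd_belowI[of _ 0])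
  define d where "d = Inf D"
  have d_le: "d \<le> nm (x - z)" if "\<phi> z = 0" for z
    unfolding d_def by (rule cInf_lower[OF _ \<open>bdd_below D\<close>]) (use that D_def in blast)
  have "0 \<le> d"
    unfolding d_def D_def using scl[of 0 x] by (intro cInf_greatest) auto
  define \<epsilon> where "\<epsilon> k = 1 / (real k + 1)" for k
  have "\<exists>z. \<phi> z = 0 \<and> nm (x - z) < d + \<epsilon> k" for k
    using cInf_lessD[OF \<open>D \<noteq> {}\<close>, of "d + \<epsilon> k"] unfolding d_def D_def \<epsilon>_def by auto
  then obtain Z where Z: "\<And>k. \<phi> (Z k) = 0" "\<And>k. nm (x - Z k) < d + \<epsilon> k"
    by metis
  have \<epsilon>_null: "\<epsilon> \<longlonglongrightarrow> 0"
    unfolding \<epsilon>_def using LIMSEQ_Suc[OF lim_1_over_n] by (simp add: add.commute)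
  obtain y where y: "(\<lambda>k. nm (Z k - y)) \<longlonglongrightarrow> 0"
  proof (rule minimizing_sequence_convergent[OF _ \<open>0 \<le> d\<close> less_imp_le[OF Z(2)] _ _ \<epsilon>_null])
    show "d \<le> nm (x - sc (1 / 2) (Z m + Z k))" for m k by (rule d_le) (simp add: add scl Z(1))
  qed (auto simp: \<epsilon>_def)
  show ?thesis
  proof
    have "cmod (\<phi> y) \<le> K * nm (Z k - y)" for k
      using bounded[of "y - Z k"] add[of "y - Z k" "Z k"] Z(1)[of k] by (simp add: nm_minus_commute)
    moreover have "(\<lambda>k. K * nm (Z k - y)) \<longlonglongrightarrow> 0"
      using tendsto_mult_right_zero[OF y] by simp
    ultimately show "\<phi> y = 0"
      using LIMSEQ_le_const[of "\<lambda>k. K * nm (Z k - y)" 0 "cmod (\<phi> y)"] by auto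
  next
    have "nm (x - y) \<le> d + \<epsilon> k + nm (Z k - y)" for k
      using nm_diff_triangle[of x y "Z k"] Z(2)[of k] nm_minus_commute[of y "Z k"] by linarith
    moreover have "(\<lambda>k. d + \<epsilon> k + nm (Z k - y)) \<longlonglongrightarrow> d + 0 + 0"
      by (intro tendsto_add tendsto_const y \<epsilon>_null)
    ultimately have "nm (x - y) \<le> d"
      using LIMSEQ_le_const[of "\<lambda>k. d + \<epsilon> k + nm (Z k - y)"] by auto
    then show "nm (x - y) \<le> nm (x - z)" if "\<phi> z = 0" for z
      using d_le[OF that] by linarith
  qed
qed

lemma riesz_representation:
  fixes \<phi> :: "'a \<Rightarrow> complex"
  assumes add: "\<And>x y. \<phi> (x + y) = \<phi> x + \<phi> y" and scl: "\<And>a x. \<phi> (sc a x) = a * \<phi> x"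
    and bounded: "\<And>x. cmod (\<phi> x) \<le> K * nm x"
  obtains v where "\<And>x. \<phi> x = ip x v"
proof (cases "\<forall>x. \<phi> x = 0")
  case True
  then show ?thesis by (intro that[of 0]) simp
next
  case False
  then obtain x where "\<phi> x \<noteq> 0" by blast
  have \<phi>_diff: "\<phi> (x - y) = \<phi> x - \<phi> y" for x y
    using add[of "x - y" y] by simp
  obtain y where y: "\<phi> y = 0" "\<And>z. \<phi> z = 0 \<Longrightarrow> nm (x - y) \<le> nm (x - z)"
    using nearest_point_in_kernel[OF add scl bounded] by blast
  define h where "h = x - y"
  have "\<phi> h = \<phi> x" unfolding h_def using \<phi>_diff y(1) by simp
  then have "h \<noteq> 0" using \<open>\<phi> x \<noteq> 0\<close> scl[of 0 0] by auto
  have orthogonal: "ip h z = 0" if "\<phi> z = 0" for z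
  proof (rule ccontr)
    assume "ip h z \<noteq> 0"
    then have "z \<noteq> 0" by auto
    define t where "t = ip h z / ip z z"
    have "\<phi> (y + sc t z) = 0" using add scl y(1) that by simp
    then have "(nm h)\<^sup>2 \<le> (nm (h - sc t z))\<^sup>2"
      using y(2)[of "y + sc t z"] unfolding h_def by (simp add: diff_diff_eq)
    also have "\<dots> = (nm h)\<^sup>2 - (cmod (ip h z))\<^sup>2 / (nm z)\<^sup>2"
      unfolding t_def by (rule nm_sub_projection[OF \<open>z \<noteq> 0\<close>])
    moreover have "0 < (cmod (ip h z))\<^sup>2 / (nm z)\<^sup>2"
      using \<open>ip h z \<noteq> 0\<close> \<open>z \<noteq> 0\<close> by simp
    ultimately show False by linarith
  qed
  show ?thesis
  proof (rule that[of "sc (cnj (\<phi> h / ip h h)) h"])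
    fix w
    have "\<phi> (w - sc (\<phi> w / \<phi> h) h) = 0"
      using \<phi>_diff scl \<open>\<phi> h = \<phi> x\<close> \<open>\<phi> x \<noteq> 0\<close> by simp
    then have "ip w h = (\<phi> w / \<phi> h) * ip h h"
      using orthogonal ip_commute by (metis complex_cnj_zero eq_iff_diff_eq_0 ip_diff_left ip_sc_left)
    then show "\<phi> w = ip w (sc (cnj (\<phi> h / ip h h)) h)"
      using \<open>h \<noteq> 0\<close> \<open>\<phi> h = \<phi> x\<close> \<open>\<phi> x \<noteq> 0\<close> by (simp add: field_simps)
  qed
qed

section \<open>Bounded operators and polynomials in them\<close>

definition linear_op :: "('a \<Rightarrow> 'a) \<Rightarrow> bool" where
  "linear_op T \<longleftrightarrow> (\<forall>x y. T (x + y) = T x + T y) \<and> (\<forall>a x. T (sc a x) = sc a (T x))"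

lemma linear_op_add: "linear_op T \<Longrightarrow> T (x + y) = T x + T y"
  and linear_op_sc: "linear_op T \<Longrightarrow> T (sc a x) = sc a (T x)"
  unfolding linear_op_def by blast+

lemma linear_op_zero: "linear_op T \<Longrightarrow> T 0 = 0"
  using linear_op_add[of T 0 0] by simp

lemma linear_op_minus: "linear_op T \<Longrightarrow> T (- x) = - T x"
  using linear_op_add[of T x "- x"] linear_op_zero[of T] by (simp add: add_eq_0_iff)

lemma linear_op_diff: "linear_op T \<Longrightarrow> T (x - y) = T x - T y"
  using linear_op_add[of T x "- y"] linear_op_minus[of T y] by simp

lemmas linear_op_simps = linear_op_add linear_op_sc linear_op_zero linear_op_minus linear_op_diff

lemma linear_op_funpow: "linear_op T \<Longrightarrow> linear_op (T ^^ n)"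
  by (induction n) (auto simp: linear_op_def)

lemma linear_op_if_hbounded: "hbounded sc ip T \<Longrightarrow> linear_op T"
  unfolding hbounded_def linear_op_def by blast

lemma hbounded_bound:
  assumes "hbounded sc ip T"
  obtains K where "K > 0" "\<And>x. nm (T x) \<le> K * nm x"
proof -
  obtain K where K: "\<And>x. nm (T x) \<le> K * nm x" using assms unfolding hbounded_def by blast
  have "nm (T x) \<le> max K 1 * nm x" for x
    using K[of x] mult_right_mono[of K "max K 1" "nm x"] by simp
  then show ?thesis using that[of "max K 1"] by simp
qed

lemma hadj_ip:
  assumes "hbounded sc ip T"
  shows "ip (T x) y = ip x (hadj ip T y)"
proof -
  have lin: "linear_op T" using linear_op_if_hbounded[OF assms] .
  obtain K where K: "\<And>x. nm (T x) \<le> K * nm x" using hbounded_bound[OF assms] by blast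
  have "\<exists>v. \<forall>x. ip (T x) y = ip x v" for y
  proof -
    have "cmod (ip (T x) y) \<le> K * nm y * nm x" for x
      using Cauchy_Schwarz[of "T x" y] mult_right_mono[OF K[of x] nm_nonneg[of y]]
      by (simp add: algebra_simps)
    then obtain v where "\<And>x. ip (T x) y = ip x v"
      by (rule riesz_representation[rotated 2]) (simp_all add: lin linear_op_simps ip_simps)
    then show ?thesis by blast
  qed
  then obtain S where S: "\<forall>x y. ip (T x) y = ip x (S y)" by metis
  have "\<forall>x y. ip (T x) y = ip x (hadj ip T y)"
    unfolding hadj_def
  proof (rule theI[of _ S])
    show "S' = S" if "\<forall>x y. ip (T x) y = ip x (S' y)" for S'
      using that S by (intro ext ip_eqI_right) metis
  qed (rule S)
  then show ?thesis by blast
qed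

lemma linear_op_hadj:
  assumes "hbounded sc ip T"
  shows "linear_op (hadj ip T)"
  unfolding linear_op_def
  by (intro conjI allI; rule ip_eqI_right) (simp_all add: hadj_ip[OF assms, symmetric] ip_simps)

lemma hadj_ip_funpow:
  assumes "hbounded sc ip T"
  shows "ip ((T ^^ n) x) y = ip x ((hadj ip T ^^ n) y)"
proof (induction n arbitrary: x)
  case (Suc n)
  have "ip ((T ^^ Suc n) x) y = ip ((T ^^ n) (T x)) y"
    by (simp add: funpow_Suc_right del: funpow.simps)
  also have "\<dots> = ip x (hadj ip T ((hadj ip T ^^ n) y))"
    by (simp add: Suc.IH hadj_ip[OF assms])
  finally show ?case by simp
qed simp

lemma normal_op_nm_sq_le:
  assumes adj: "\<And>x y. ip (N x) y = ip x (N' y)" and normal: "\<And>y. N' (N y) = N (N' y)"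
  shows "(nm (N y))\<^sup>2 \<le> nm (N (N y)) * nm y"
proof -
  have nm_adj: "nm (N' z) = nm (N z)" for z
  proof -
    have "ip (N z) (N z) = cnj (ip (N' z) (N' z))"
      using adj[of z "N z"] adj[of "N' z" z] normal[of z] ip_commute by metis
    then have "Re (ip (N z) (N z)) = Re (ip (N' z) (N' z))" by simp
    then show ?thesis by (simp add: hnorm_def)
  qed
  have "(nm (N y))\<^sup>2 = Re (ip y (N' (N y)))" by (simp add: power2_nm adj)
  also have "\<dots> \<le> nm y * nm (N' (N y))"
    using complex_Re_le_cmod Cauchy_Schwarz order_trans by blast
  finally show ?thesis by (simp add: nm_adj mult.commute)
qed

lemma not_in_hspectrum_if_bounded_below_surj:
  assumes lin: "linear_op A" and below: "\<And>y. nm y \<le> c * nm (A y - sc l y)"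
    and surj: "\<And>v. \<exists>x. A x - sc l x = v"
  shows "l \<notin> hspectrum sc ip A"
proof -
  define T where "T x = A x - sc l x" for x
  have lin_T: "linear_op T"
    using lin unfolding linear_op_def T_def by (simp add: sc_simps algebra_simps)
  have inj: "x = y" if "T x = T y" for x y
    using below[of "x - y"] that linear_op_diff[OF lin_T, of x y] by (simp add: T_def)
  define B where "B v = (SOME x. T x = v)" for v
  have TB: "T (B v) = v" for v
    unfolding B_def using surj[of v] by (auto simp: T_def intro: someI_ex)
  have "hbounded sc ip B"
    unfolding hbounded_def
  proof (intro conjI allI exI)
    show "B (x + y) = B x + B y" for x y by (rule inj) (simp add: TB linear_op_add[OF lin_T])
    show "B (sc a x) = sc a (B x)" for a x by (rule inj) (simp add: TB linear_op_sc[OF lin_T])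
    show "nm (B x) \<le> c * nm x" for x using below[of "B x"] TB[of x] by (simp add: T_def)
  qed
  moreover have "B (A x - sc l x) = x" for x using inj[of "B (T x)" x] TB[of "T x"] by (simp add: T_def)
  moreover have "A (B x) - sc l (B x) = x" for x using TB[of x] by (simp add: T_def)
  ultimately show ?thesis unfolding hspectrum_def by blast
qed

text \<open>\<open>poly_op p T x\<close> is \<open>p(T) x\<close>, evaluated by Horner's rule.\<close>
definition poly_op :: "complex poly \<Rightarrow> ('a \<Rightarrow> 'a) \<Rightarrow> 'a \<Rightarrow> 'a" where
  "poly_op p T x = fold_coeffs (\<lambda>a y. sc a x + T y) p 0"

lemma poly_op_0 [simp]: "poly_op 0 T x = 0"
  by (simp add: poly_op_def)

lemma poly_op_pCons:
  assumes "linear_op T"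
  shows "poly_op (pCons a p) T x = sc a x + T (poly_op p T x)"
  by (cases "p = 0 \<and> a = 0") (auto simp: poly_op_def linear_op_zero[OF assms])

lemma poly_op_const: "linear_op T \<Longrightarrow> poly_op [:c:] T x = sc c x"
  by (simp add: poly_op_pCons linear_op_zero)

lemma poly_op_linear_factor: "linear_op T \<Longrightarrow> poly_op [:- c, 1:] T x = T x - sc c x"
  by (simp add: poly_op_pCons linear_op_zero sc_minus_left)

lemma poly_op_add:
  assumes "linear_op T"
  shows "poly_op (p + q) T x = poly_op p T x + poly_op q T x"
proof (induction p arbitrary: q rule: pCons_induct)
  case (pCons a p)
  then show ?case
    using assms by (cases q) (simp add: poly_op_pCons linear_op_add sc_add_left algebra_simps)
qed simp

lemma poly_op_smult:
  assumes "linear_op T"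
  shows "poly_op (smult c p) T x = sc c (poly_op p T x)"
  by (induction p rule: pCons_induct) (simp_all add: assms poly_op_pCons linear_op_sc sc_add_right)

lemma poly_op_diff:
  assumes "linear_op T"
  shows "poly_op (p - q) T x = poly_op p T x - poly_op q T x"
  using poly_op_add[OF assms, of p "- q" x] poly_op_smult[OF assms, of "- 1" q x]
  by (simp add: sc_minus_left)

lemma poly_op_mult:
  assumes "linear_op T"
  shows "poly_op (p * q) T x = poly_op p T (poly_op q T x)"
  by (induction p rule: pCons_induct) (simp_all add: assms poly_op_pCons poly_op_add poly_op_smult)

lemma poly_op_power:
  assumes "linear_op T"
  shows "poly_op (p ^ k) T x = (poly_op p T ^^ k) x"
  by (induction k arbitrary: x) (simp_all add: assms poly_op_mult poly_op_const flip: pCons_one)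

lemma poly_op_monomial_power:
  assumes "linear_op T"
  shows "poly_op ([:0, 1:] ^ n) T x = (T ^^ n) x"
proof -
  have "poly_op [:0, 1:] T = T" using assms by (simp add: poly_op_pCons linear_op_zero fun_eq_iff)
  then show ?thesis by (simp add: poly_op_power[OF assms])
qed

lemma poly_op_commute:
  assumes "linear_op T" "linear_op S" "\<And>y. S (T y) = T (S y)"
  shows "S (poly_op p T x) = poly_op p T (S x)"
  by (induction p rule: pCons_induct) (simp_all add: assms poly_op_pCons linear_op_simps)

lemma heigenvalue_if_linear_factor_power_annihilates:
  assumes "linear_op T" "y \<noteq> 0" "poly_op ([:- c, 1:] ^ m) T y = 0"
  shows "heigenvalue sc T c"
  using assms(2,3)
proof (induction m arbitrary: y)
  case 0
  then show ?case using poly_op_const[OF assms(1), of 1 y] by (simp add: pCons_one)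
next
  case (Suc m)
  show ?case
  proof (cases "T y - sc c y = 0")
    case True
    then show ?thesis unfolding heigenvalue_def using \<open>y \<noteq> 0\<close> by auto
  next
    case False
    have "poly_op ([:- c, 1:] ^ Suc m) T y = poly_op ([:- c, 1:] ^ m) T (poly_op [:- c, 1:] T y)"
      by (simp only: power_Suc2 poly_op_mult[OF assms(1)])
    then have "poly_op ([:- c, 1:] ^ m) T (T y - sc c y) = 0"
      using Suc.prems(2) by (simp add: poly_op_linear_factor[OF assms(1)])
    then show ?thesis using Suc.IH[OF False] by blast
  qed
qed

lemma normal_op_funpow_lower_bound:
  assumes adj: "\<And>x y. ip (N x) y = ip x (N' y)" and normal: "\<And>y. N' (N y) = N (N' y)"
    and "N x \<noteq> 0"
  shows "nm ((N ^^ k) x) \<ge> (nm (N x) / nm x) ^ k * nm x"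
proof -
  have "x \<noteq> 0" using \<open>N x \<noteq> 0\<close> adj[of x "N x"] by auto
  have "(nm ((N ^^ Suc k) x))\<^sup>2 \<le> nm ((N ^^ Suc (Suc k)) x) * nm ((N ^^ k) x)" for k
    using normal_op_nm_sq_le[OF adj normal, of "(N ^^ k) x"] by simp
  then show ?thesis
    using log_convex_seq_lower_bound[of "\<lambda>k. nm ((N ^^ k) x)" k] \<open>x \<noteq> 0\<close> \<open>N x \<noteq> 0\<close> by simp
qed

lemma hadj_ip_funpow_minus_scalar:
  assumes "hbounded sc ip A"
  shows "ip ((A ^^ n) x - sc c x) y = ip x ((hadj ip A ^^ n) y - sc (cnj c) y)"
  by (simp add: ip_simps hadj_ip_funpow[OF assms])

lemma normal_funpow_minus_scalar:
  assumes "hbounded sc ip A" and comm: "hadj ip A \<circ> (A ^^ n) = (A ^^ n) \<circ> hadj ip A"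
  shows "(hadj ip A ^^ n) ((A ^^ n) y - sc c y) - sc (cnj c) ((A ^^ n) y - sc c y)
    = (A ^^ n) ((hadj ip A ^^ n) y - sc (cnj c) y) - sc c ((hadj ip A ^^ n) y - sc (cnj c) y)"
proof -
  have "(hadj ip A ^^ k) ((A ^^ n) y) = (A ^^ n) ((hadj ip A ^^ k) y)" for k y
    using comm by (induction k) (simp_all add: fun_eq_iff)
  then show ?thesis
    using linear_op_funpow[OF linear_op_if_hbounded[OF assms(1)], of n]
      linear_op_funpow[OF linear_op_hadj[OF assms(1)], of n]
    by (simp add: linear_op_simps sc_simps algebra_simps mult.commute)
qed

end

section \<open>The resolvent near an isolated point of the spectrum\<close>

locale punctured_resolvent_disc = complex_hilbert +
  fixes A :: "'a \<Rightarrow> 'a" and l :: complex and r0 :: real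
  assumes hbounded_A: "hbounded sc ip A" and r0_pos: "r0 > 0"
    and resolvent_set: "\<And>z. z \<in> ball l r0 - {l} \<Longrightarrow> z \<notin> hspectrum sc ip A"
begin

abbreviation disc :: "complex set" where "disc \<equiv> ball l r0 - {l}"

lemma open_disc: "open disc"
  by (simp add: open_Diff)

lemma linear_op_A: "linear_op A"
  using linear_op_if_hbounded[OF hbounded_A] .

definition resolvent :: "complex \<Rightarrow> 'a \<Rightarrow> 'a" where
  "resolvent z = (SOME B. hbounded sc ip B \<and> (\<forall>x. B (A x - sc z x) = x) \<and> (\<forall>x. A (B x) - sc z (B x) = x))"

lemma
  assumes "z \<in> disc"
  shows hbounded_resolvent: "hbounded sc ip (resolvent z)"
    and resolvent_left_inverse: "resolvent z (A x - sc z x) = x"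
    and resolvent_right_inverse: "A (resolvent z x) - sc z (resolvent z x) = x"
proof -
  have "\<exists>B. hbounded sc ip B \<and> (\<forall>x. B (A x - sc z x) = x) \<and> (\<forall>x. A (B x) - sc z (B x) = x)"
    using resolvent_set[OF assms] unfolding hspectrum_def by blast
  then have "hbounded sc ip (resolvent z) \<and> (\<forall>x. resolvent z (A x - sc z x) = x)
      \<and> (\<forall>x. A (resolvent z x) - sc z (resolvent z x) = x)"
    unfolding resolvent_def by (rule someI_ex)
  then show "hbounded sc ip (resolvent z)" "resolvent z (A x - sc z x) = x"
      "A (resolvent z x) - sc z (resolvent z x) = x"
    by auto
qed

lemma linear_op_resolvent: "z \<in> disc \<Longrightarrow> linear_op (resolvent z)"
  using linear_op_if_hbounded hbounded_resolvent by blast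

lemma A_resolvent: "z \<in> disc \<Longrightarrow> A (resolvent z x) = x + sc z (resolvent z x)"
  using resolvent_right_inverse[of z x] by (simp add: algebra_simps)

lemma resolvent_A:
  assumes "z \<in> disc"
  shows "resolvent z (A x) = A (resolvent z x)"
proof -
  have "resolvent z (A x) = resolvent z ((A x - sc z x) + sc z x)" by simp
  also have "\<dots> = x + sc z (resolvent z x)"
    using assms by (simp only: linear_op_add[OF linear_op_resolvent] linear_op_sc[OF linear_op_resolvent]
        resolvent_left_inverse)
  finally show ?thesis using A_resolvent[OF assms] by simp
qed

lemma resolvent_identity:
  assumes "z \<in> disc" "y \<in> disc"
  shows "resolvent y v - resolvent z v = sc (y - z) (resolvent y (resolvent z v))"
proof -
  define u where "u = resolvent z v"
  have "v = (A u - sc y u) + sc (y - z) u"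
    using resolvent_right_inverse[OF assms(1), of v] by (simp add: u_def sc_simps algebra_simps)
  then have "resolvent y v = resolvent y (A u - sc y u) + resolvent y (sc (y - z) u)"
    using linear_op_add[OF linear_op_resolvent[OF assms(2)]] by metis
  also have "\<dots> = u + sc (y - z) (resolvent y u)"
    by (simp add: resolvent_left_inverse[OF assms(2)] linear_op_sc[OF linear_op_resolvent[OF assms(2)]])
  finally show ?thesis by (simp add: u_def)
qed

text \<open>This also applies at \<open>w = l\<close>, outside the disc.\<close>
lemma bounded_below_near_resolvent:
  assumes "z \<in> disc" "K > 0" "\<And>v. nm (resolvent z v) \<le> K * nm v" "cmod (w - z) \<le> 1 / (2 * K)"
  shows "nm u \<le> 2 * K * nm (A u - sc w u)"
proof -
  have "nm u = nm (resolvent z ((A u - sc w u) + sc (w - z) u))"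
    using resolvent_left_inverse[OF assms(1), of u] by (simp add: sc_simps algebra_simps)
  also have "\<dots> \<le> K * nm ((A u - sc w u) + sc (w - z) u)"
    by (rule assms(3))
  also have "\<dots> \<le> K * (nm (A u - sc w u) + cmod (w - z) * nm u)"
    using nm_triangle[of "A u - sc w u" "sc (w - z) u"] assms(2) by (simp add: nm_sc)
  also have "\<dots> \<le> K * nm (A u - sc w u) + nm u / 2"
    using mult_right_mono[OF assms(4) nm_nonneg[of u]] assms(2) by (simp add: field_simps)
  finally show ?thesis by simp
qed

lemma resolvent_bound_near:
  assumes "z \<in> disc" "y \<in> disc" "K > 0" "\<And>v. nm (resolvent z v) \<le> K * nm v"
    "cmod (y - z) \<le> 1 / (2 * K)"
  shows "nm (resolvent y v) \<le> 2 * K * nm v"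
  using bounded_below_near_resolvent[OF assms(1,3,4,5), of "resolvent y v"]
  by (simp add: resolvent_right_inverse[OF assms(2)])

lemma resolvent_lipschitz:
  assumes "z \<in> disc" "y \<in> disc" "K > 0" "\<And>v. nm (resolvent z v) \<le> K * nm v"
    "cmod (y - z) \<le> 1 / (2 * K)"
  shows "nm (resolvent y v - resolvent z v) \<le> cmod (y - z) * (2 * K * K * nm v)"
proof -
  have "nm (resolvent y v - resolvent z v) = cmod (y - z) * nm (resolvent y (resolvent z v))"
    using resolvent_identity[OF assms(1,2)] by (simp add: nm_sc)
  also have "\<dots> \<le> cmod (y - z) * (2 * K * (K * nm v))"
    using resolvent_bound_near[OF assms] assms(3,4)
    by (intro mult_left_mono order_trans[OF _ mult_left_mono[OF assms(4)]]) auto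
  finally show ?thesis by (simp add: algebra_simps)
qed

definition resolvent_form :: "'a \<Rightarrow> 'a \<Rightarrow> complex \<Rightarrow> complex" where
  "resolvent_form u w z = ip (resolvent z u) w"

lemma resolvent_form_bound:
  assumes "\<And>v. nm (resolvent z v) \<le> M * nm v"
  shows "cmod (resolvent_form u w z) \<le> M * nm u * nm w"
proof -
  have "cmod (resolvent_form u w z) \<le> nm (resolvent z u) * nm w"
    unfolding resolvent_form_def by (rule Cauchy_Schwarz)
  also have "\<dots> \<le> M * nm u * nm w"
    using assms[of u] by (intro mult_right_mono) auto
  finally show ?thesis .
qed

lemma resolvent_form_tendsto:
  assumes "z \<in> disc"
  shows "(resolvent_form u w \<longlongrightarrow> resolvent_form u w z) (at z)"
proof -
  obtain K where K: "K > 0" "\<And>v. nm (resolvent z v) \<le> K * nm v"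
    using hbounded_bound[OF hbounded_resolvent[OF assms]] by blast
  have "eventually (\<lambda>y. y \<in> disc \<and> y \<in> ball z (1 / (2 * K))) (at z)"
    using eventually_conj[OF eventually_at_in_open'[OF open_disc assms] eventually_at_ball[of "1 / (2 * K)" z UNIV]]
      K(1)
    by simp
  then have "eventually (\<lambda>y. cmod (resolvent_form u w y - resolvent_form u w z)
      \<le> cmod (y - z) * (2 * K * K * nm u) * nm w) (at z)"
  proof (rule eventually_mono)
    fix y assume y: "y \<in> disc \<and> y \<in> ball z (1 / (2 * K))"
    then have "cmod (y - z) \<le> 1 / (2 * K)" by (simp add: dist_norm norm_minus_commute)
    have "cmod (resolvent_form u w y - resolvent_form u w z) = cmod (ip (resolvent y u - resolvent z u) w)"
      by (simp add: resolvent_form_def ip_diff_left)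
    also have "\<dots> \<le> nm (resolvent y u - resolvent z u) * nm w"
      by (rule Cauchy_Schwarz)
    also have "\<dots> \<le> cmod (y - z) * (2 * K * K * nm u) * nm w"
      using resolvent_lipschitz[OF assms _ K \<open>cmod (y - z) \<le> 1 / (2 * K)\<close>, of u] y
      by (intro mult_right_mono) auto
    finally show "cmod (resolvent_form u w y - resolvent_form u w z)
      \<le> cmod (y - z) * (2 * K * K * nm u) * nm w" .
  qed
  moreover have lim: "((\<lambda>y. cmod (y - z)) \<longlongrightarrow> 0) (at z)"
    using tendsto_norm_zero[OF LIM_zero[OF tendsto_ident_at]] .
  have "((\<lambda>y. cmod (y - z) * (2 * K * K * nm u) * nm w) \<longlongrightarrow> 0) (at z)"
    by (intro tendsto_mult_left_zero lim)
  ultimately have "((\<lambda>y. resolvent_form u w y - resolvent_form u w z) \<longlongrightarrow> 0) (at z)"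
    by (rule Lim_null_comparison)
  then show ?thesis by (rule LIM_zero_cancel)
qed

lemma resolvent_form_has_derivative:
  assumes "z \<in> disc"
  shows "(resolvent_form u w has_field_derivative resolvent_form (resolvent z u) w z) (at z)"
  unfolding has_field_derivative_iff
proof (rule Lim_transform_eventually[OF resolvent_form_tendsto[OF assms]])
  show "\<forall>\<^sub>F y in at z. resolvent_form (resolvent z u) w y
      = (resolvent_form u w y - resolvent_form u w z) / (y - z)"
    using eventually_at_in_open[OF open_disc assms]
  proof (rule eventually_mono)
    fix y assume "y \<in> disc - {z}"
    then show "resolvent_form (resolvent z u) w y = (resolvent_form u w y - resolvent_form u w z) / (y - z)"
      using resolvent_identity[OF assms, of y u] unfolding resolvent_form_def
      by (simp add: ip_diff_left[symmetric])
  qed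
qed

lemma resolvent_form_holomorphic: "resolvent_form u w holomorphic_on disc"
  unfolding holomorphic_on_def field_differentiable_def
  using resolvent_form_has_derivative has_field_derivative_at_within by blast

lemma resolvent_bounded_on_circle:
  assumes "0 < r" "r < r0"
  obtains M where "M > 0" "\<And>z v. cmod (z - l) = r \<Longrightarrow> nm (resolvent z v) \<le> M * nm v"
proof -
  have sphere_disc: "sphere l r \<subseteq> disc"
    using assms by (auto simp: dist_norm)
  obtain M where M: "\<And>y. y \<in> sphere l r \<Longrightarrow> \<forall>v. nm (resolvent y v) \<le> M * nm v"
  proof (rule locally_bounded_on_compact[of "sphere l r"])
    fix x assume "x \<in> sphere l r"
    then have "x \<in> disc" using sphere_disc by blast
    obtain K where K: "K > 0" "\<And>v. nm (resolvent x v) \<le> K * nm v"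
      using hbounded_bound[OF hbounded_resolvent[OF \<open>x \<in> disc\<close>]] by blast
    have "\<forall>v. nm (resolvent y v) \<le> 2 * K * nm v" if "y \<in> sphere l r" "dist y x < 1 / (2 * K)" for y
    proof -
      have "y \<in> disc" using that(1) sphere_disc by blast
      then show ?thesis using resolvent_bound_near[OF \<open>x \<in> disc\<close> _ K] that(2) by (simp add: dist_norm)
    qed
    then show "\<exists>e>0. \<exists>M. \<forall>y\<in>sphere l r. dist y x < e \<longrightarrow> (\<forall>v. nm (resolvent y v) \<le> M * nm v)"
      using K(1) by (intro exI[of _ "1 / (2 * K)"] conjI exI[of _ "2 * K"]) auto
  next
    fix y M M' assume "\<forall>v. nm (resolvent y v) \<le> M * nm v" "M \<le> M'"
    then show "\<forall>v. nm (resolvent y v) \<le> M' * nm v"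
      by (meson mult_right_mono nm_nonneg order_trans)
  qed auto
  show ?thesis
  proof (rule that[of "max M 1"])
    fix z v assume "cmod (z - l) = r"
    then have "nm (resolvent z v) \<le> M * nm v" using M by (simp add: dist_norm norm_minus_commute)
    also have "\<dots> \<le> max M 1 * nm v" by (intro mult_right_mono) auto
    finally show "nm (resolvent z v) \<le> max M 1 * nm v" .
  qed simp
qed

section \<open>The Riesz projection\<close>

lemma circle_in_disc: "0 < r \<Longrightarrow> r < r0 \<Longrightarrow> path_image (circlepath l r) \<subseteq> disc"
  by (auto simp: path_image_circlepath dist_norm norm_minus_commute)

definition riesz_form :: "'a \<Rightarrow> 'a \<Rightarrow> complex" where
  "riesz_form u w = residue (resolvent_form u w) l"

lemma resolvent_form_contour_integral:
  assumes "0 < r" "r < r0"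
  shows "(resolvent_form u w has_contour_integral 2 * pi * \<i> * riesz_form u w) (circlepath l r)"
  unfolding riesz_form_def
  by (rule base_residue[of "ball l r0"]) (use assms resolvent_form_holomorphic in auto)

lemma riesz_form_linear_combination:
  assumes "\<And>z. z \<in> disc \<Longrightarrow>
      resolvent_form u w z = a * resolvent_form u1 w1 z + b * resolvent_form u2 w2 z"
  shows "riesz_form u w = a * riesz_form u1 w1 + b * riesz_form u2 w2"
proof -
  have r: "0 < r0 / 2" "r0 / 2 < r0" using r0_pos by auto
  have "((\<lambda>z. a * resolvent_form u1 w1 z + b * resolvent_form u2 w2 z) has_contour_integral
      a * (2 * pi * \<i> * riesz_form u1 w1) + b * (2 * pi * \<i> * riesz_form u2 w2)) (circlepath l (r0 / 2))"
    by (intro has_contour_integral_add has_contour_integral_lmul resolvent_form_contour_integral r)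
  then have "(resolvent_form u w has_contour_integral
      a * (2 * pi * \<i> * riesz_form u1 w1) + b * (2 * pi * \<i> * riesz_form u2 w2)) (circlepath l (r0 / 2))"
  proof (rule has_contour_integral_eq)
    fix z assume "z \<in> path_image (circlepath l (r0 / 2))"
    then have "z \<in> disc" using circle_in_disc[OF r] by blast
    then show "a * resolvent_form u1 w1 z + b * resolvent_form u2 w2 z = resolvent_form u w z"
      using assms by simp
  qed
  then have "2 * pi * \<i> * riesz_form u w = a * (2 * pi * \<i> * riesz_form u1 w1) + b * (2 * pi * \<i> * riesz_form u2 w2)"
    by (rule has_contour_integral_unique[OF resolvent_form_contour_integral[OF r]])
  then have "2 * pi * \<i> * riesz_form u w = 2 * pi * \<i> * (a * riesz_form u1 w1 + b * riesz_form u2 w2)"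
    by (simp add: algebra_simps)
  then show ?thesis by simp
qed

lemma riesz_form_add_left: "riesz_form (u + u') w = riesz_form u w + riesz_form u' w"
  by (rule riesz_form_linear_combination[of _ _ 1 u w 1 u' w, simplified])
    (simp add: resolvent_form_def linear_op_add[OF linear_op_resolvent] ip_add_left)

lemma riesz_form_sc_left: "riesz_form (sc c u) w = c * riesz_form u w"
  by (rule riesz_form_linear_combination[of _ _ c u w 0 u w, simplified])
    (simp add: resolvent_form_def linear_op_sc[OF linear_op_resolvent])

lemma riesz_form_add_right: "riesz_form u (w + w') = riesz_form u w + riesz_form u w'"
  by (rule riesz_form_linear_combination[of _ _ 1 u w 1 u w', simplified])
    (simp add: resolvent_form_def ip_add_right)

lemma riesz_form_sc_right: "riesz_form u (sc c w) = cnj c * riesz_form u w"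
  by (rule riesz_form_linear_combination[of _ _ "cnj c" u w 0 u w, simplified])
    (simp add: resolvent_form_def)

lemma riesz_form_bound:
  obtains C where "\<And>u w. cmod (riesz_form u w) \<le> C * nm u * nm w"
proof -
  have r: "0 < r0 / 2" "r0 / 2 < r0" using r0_pos by auto
  obtain M where M: "M > 0" "\<And>z v. cmod (z - l) = r0 / 2 \<Longrightarrow> nm (resolvent z v) \<le> M * nm v"
    using resolvent_bounded_on_circle[OF r] by blast
  have "cmod (riesz_form u w) \<le> r0 / 2 * M * nm u * nm w" for u w
  proof -
    have "cmod (2 * pi * \<i> * riesz_form u w) \<le> M * nm u * nm w * (2 * pi * (r0 / 2))"
      using M r by (intro has_contour_integral_bound_circlepath[OF resolvent_form_contour_integral[OF r]]
          resolvent_form_bound) auto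
    then show ?thesis by (simp add: norm_mult mult_ac)
  qed
  then show ?thesis by (rule that)
qed

text \<open>Since \<open>R(z) = (A - z)\<^sup>-\<^sup>1\<close>, this is minus the usual Riesz projection.\<close>
definition riesz_proj :: "'a \<Rightarrow> 'a" where
  "riesz_proj u = (SOME v. \<forall>w. riesz_form u w = ip v w)"

lemma riesz_form_eq_ip: "riesz_form u w = ip (riesz_proj u) w"
proof -
  obtain C where C: "\<And>u w. cmod (riesz_form u w) \<le> C * nm u * nm w"
    using riesz_form_bound by blast
  obtain v where "\<And>w. cnj (riesz_form u w) = ip w v"
    by (rule riesz_representation[of "\<lambda>w. cnj (riesz_form u w)" "C * nm u"])
      (simp_all add: riesz_form_add_right riesz_form_sc_right C)
  then have "\<forall>w. riesz_form u w = ip v w" by (metis complex_cnj_cnj ip_commute)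
  then have "\<forall>w. riesz_form u w = ip (riesz_proj u) w"
    unfolding riesz_proj_def by (rule someI)
  then show ?thesis by blast
qed

lemma linear_op_riesz_proj: "linear_op riesz_proj"
  unfolding linear_op_def
  by (auto intro!: ip_eqI simp: riesz_form_eq_ip[symmetric] riesz_form_add_left riesz_form_sc_left ip_add_left)

lemma riesz_proj_poly_op: "riesz_proj (poly_op p A u) = poly_op p A (riesz_proj u)"
proof (rule poly_op_commute[OF linear_op_A linear_op_riesz_proj])
  fix u
  have "riesz_form (A u) w = riesz_form u (hadj ip A w)" for w
    by (rule riesz_form_linear_combination[of _ _ 1 u "hadj ip A w" 0 u w, simplified])
      (simp add: resolvent_form_def resolvent_A hadj_ip[OF hbounded_A])
  then show "riesz_proj (A u) = A (riesz_proj u)"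
    by (intro ip_eqI) (simp add: riesz_form_eq_ip hadj_ip[OF hbounded_A])
qed

lemma poly_times_resolvent_form:
  obtains e where "e holomorphic_on UNIV"
    "\<And>z. z \<in> disc \<Longrightarrow> poly p z * resolvent_form u w z = resolvent_form (poly_op p A u) w z + e z"
proof (induction p arbitrary: thesis rule: pCons_induct)
  case 0
  show ?case by (rule 0[of "\<lambda>_. 0"]) (auto simp: resolvent_form_def linear_op_resolvent linear_op_zero)
next
  case (pCons a q)
  obtain e where e: "e holomorphic_on UNIV"
    "\<And>z. z \<in> disc \<Longrightarrow> poly q z * resolvent_form u w z = resolvent_form (poly_op q A u) w z + e z"
    using pCons.IH by blast
  define v where "v = poly_op q A u"
  show ?case
  proof (rule pCons.prems[of "\<lambda>z. z * e z - ip v w"])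
    show "(\<lambda>z. z * e z - ip v w) holomorphic_on UNIV" using e(1) by (intro holomorphic_intros)
    fix z assume z: "z \<in> disc"
    have "resolvent_form (poly_op (pCons a q) A u) w z
        = a * resolvent_form u w z + resolvent_form (A v) w z"
      unfolding v_def resolvent_form_def using linear_op_A linear_op_resolvent[OF z]
      by (simp add: poly_op_pCons linear_op_simps ip_add_left)
    also have "resolvent_form (A v) w z = ip v w + z * resolvent_form v w z"
      unfolding resolvent_form_def using resolvent_A[OF z] A_resolvent[OF z] by (simp add: ip_add_left)
    finally show "poly (pCons a q) z * resolvent_form u w z
        = resolvent_form (poly_op (pCons a q) A u) w z + (z * e z - ip v w)"
      using e(2)[OF z] unfolding v_def by (simp add: algebra_simps)
  qed
qed

lemma nm_poly_op_riesz_proj_le: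
  assumes r: "0 < r" "r < r0" and "B \<ge> 0" "M \<ge> 0"
    and M: "\<And>z v. cmod (z - l) = r \<Longrightarrow> nm (resolvent z v) \<le> M * nm v"
    and B: "\<And>z. cmod (z - l) = r \<Longrightarrow> cmod (poly p z) \<le> B"
  shows "nm (poly_op p A (riesz_proj u)) \<le> r * B * M * nm u"
proof (rule nm_le_if_ip_le)
  show "0 \<le> r * B * M * nm u" using assms by simp
  fix w
  obtain e where e: "e holomorphic_on UNIV"
    "\<And>z. z \<in> disc \<Longrightarrow> poly p z * resolvent_form u w z = resolvent_form (poly_op p A u) w z + e z"
    using poly_times_resolvent_form by blast
  have "(e has_contour_integral 0) (circlepath l r)"
    by (rule Cauchy_theorem_convex_simple[OF e(1)]) auto
  then have "((\<lambda>z. resolvent_form (poly_op p A u) w z + e z) has_contour_integral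
      2 * pi * \<i> * riesz_form (poly_op p A u) w) (circlepath l r)"
    using has_contour_integral_add[OF resolvent_form_contour_integral[OF r]] by fastforce
  then have "((\<lambda>z. poly p z * resolvent_form u w z) has_contour_integral
      2 * pi * \<i> * riesz_form (poly_op p A u) w) (circlepath l r)"
  proof (rule has_contour_integral_eq)
    fix z assume "z \<in> path_image (circlepath l r)"
    then have "z \<in> disc" using circle_in_disc[OF r] by blast
    then show "resolvent_form (poly_op p A u) w z + e z = poly p z * resolvent_form u w z"
      using e(2) by simp
  qed
  then have "cmod (2 * pi * \<i> * riesz_form (poly_op p A u) w) \<le> B * (M * nm u * nm w) * (2 * pi * r)"
  proof (rule has_contour_integral_bound_circlepath)
    fix z assume "cmod (z - l) = r"
    then show "cmod (poly p z * resolvent_form u w z) \<le> B * (M * nm u * nm w)"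
      using B resolvent_form_bound[OF M] \<open>B \<ge> 0\<close> by (simp add: norm_mult mult_mono)
  qed (use assms in auto)
  then show "cmod (ip (poly_op p A (riesz_proj u)) w) \<le> r * B * M * nm u * nm w"
    by (simp add: norm_mult riesz_form_eq_ip riesz_proj_poly_op algebra_simps)
qed

lemma nm_poly_op_power_riesz_proj_le:
  assumes "poly g l = 0" "\<epsilon> > 0"
  obtains C where "\<And>k. nm (poly_op (g ^ k) A (riesz_proj u)) \<le> C * \<epsilon> ^ k"
proof -
  obtain S where g: "g = [:- l, 1:] * S"
    using assms(1) poly_eq_0_iff_dvd by (metis dvdE)
  obtain CS where CS: "CS \<ge> 0" "\<And>z. cmod (z - l) \<le> 1 \<Longrightarrow> cmod (poly S z) \<le> CS"
    using poly_bounded_near by blast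
  define r where "r = min (r0 / 2) (min 1 (\<epsilon> / (CS + 1)))"
  have r: "0 < r" "r < r0" "r \<le> 1" "r * CS \<le> \<epsilon>"
  proof -
    have "r * CS \<le> \<epsilon> / (CS + 1) * (CS + 1)"
      unfolding r_def using CS(1) assms(2) by (intro mult_mono) auto
    then show "r * CS \<le> \<epsilon>" using CS(1) by simp
  qed (use r0_pos assms(2) CS(1) in \<open>auto simp: r_def\<close>)
  obtain M where M: "M > 0" "\<And>z v. cmod (z - l) = r \<Longrightarrow> nm (resolvent z v) \<le> M * nm v"
    using resolvent_bounded_on_circle[OF r(1,2)] by blast
  have "nm (poly_op (g ^ k) A (riesz_proj u)) \<le> r * \<epsilon> ^ k * M * nm u" for k
  proof (rule nm_poly_op_riesz_proj_le[OF r(1,2) _ _ M(2)])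
    fix z assume "cmod (z - l) = r"
    have "poly g z = (z - l) * poly S z" by (simp add: g algebra_simps)
    then have "cmod (poly g z) = r * cmod (poly S z)" using \<open>cmod (z - l) = r\<close> by (simp add: norm_mult)
    also have "\<dots> \<le> r * CS" using r(1,3) CS(2) \<open>cmod (z - l) = r\<close> by (simp add: mult_left_mono)
    finally have "cmod (poly g z) \<le> \<epsilon>" using r(4) by linarith
    then show "cmod (poly (g ^ k) z) \<le> \<epsilon> ^ k"
      by (simp add: norm_power power_mono)
  qed (use assms M in auto)
  then show ?thesis
    by (intro that[of "r * M * nm u"]) (simp add: algebra_simps)
qed

lemma resolvent_convergent_if_bounded:
  assumes "c > 0" and zs: "\<And>k. zs k \<in> disc" "zs \<longlonglongrightarrow> l"
    and bound: "\<And>k v. nm (resolvent (zs k) v) \<le> c * nm v"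
  obtains x where "(\<lambda>k. nm (resolvent (zs k) v - x)) \<longlonglongrightarrow> 0"
proof (rule convergent_if_dist_le_null)
  show "nm (resolvent (zs m) v - resolvent (zs k) v)
      \<le> cmod (zs m - l) * (c * c * nm v) + cmod (zs k - l) * (c * c * nm v)" for m k
  proof -
    have "nm (resolvent (zs m) v - resolvent (zs k) v)
        = cmod (zs m - zs k) * nm (resolvent (zs m) (resolvent (zs k) v))"
      using resolvent_identity[OF zs(1) zs(1)] by (simp add: nm_sc)
    also have "\<dots> \<le> (cmod (zs m - l) + cmod (zs k - l)) * (c * (c * nm v))"
    proof (rule mult_mono)
      show "cmod (zs m - zs k) \<le> cmod (zs m - l) + cmod (zs k - l)"
        using norm_triangle_ineq4[of "zs m - l" "zs k - l"] by simp
      have "nm (resolvent (zs m) (resolvent (zs k) v)) \<le> c * nm (resolvent (zs k) v)"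
        by (rule bound)
      also have "\<dots> \<le> c * (c * nm v)"
        using bound[of k v] \<open>c > 0\<close> by (simp add: mult_left_mono)
      finally show "nm (resolvent (zs m) (resolvent (zs k) v)) \<le> c * (c * nm v)" .
    qed simp_all
    finally show ?thesis by (simp add: algebra_simps)
  qed
  show "(\<lambda>k. cmod (zs k - l) * (c * c * nm v)) \<longlonglongrightarrow> 0"
    using tendsto_mult_left_zero[OF tendsto_norm_zero[OF LIM_zero[OF zs(2)]]] .
qed

lemma surj_if_resolvent_bounded:
  assumes "c > 0" "0 < \<rho>" "\<rho> \<le> r0"
    and bound_disc: "\<And>z v. z \<in> ball l \<rho> - {l} \<Longrightarrow> nm (resolvent z v) \<le> c * nm v"
  shows "\<exists>x. A x - sc l x = v"
proof -
  obtain zs where zs_ball: "\<And>k. zs k \<in> ball l \<rho> - {l}" and "zs \<longlonglongrightarrow> l"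
    using islimpt_sequential[of l "ball l \<rho>"] islimpt_ball[of l l \<rho>] \<open>0 < \<rho>\<close> by auto
  have zs: "zs k \<in> disc" and bound: "nm (resolvent (zs k) w) \<le> c * nm w" for k w
    using zs_ball[of k] bound_disc[OF zs_ball] \<open>\<rho> \<le> r0\<close> by auto
  have null: "(\<lambda>k. cmod (zs k - l)) \<longlonglongrightarrow> 0"
    using tendsto_norm_zero[OF LIM_zero[OF \<open>zs \<longlonglongrightarrow> l\<close>]] .
  obtain x where x: "(\<lambda>k. nm (resolvent (zs k) v - x)) \<longlonglongrightarrow> 0"
    using resolvent_convergent_if_bounded[where c = c and zs = zs and v = v] \<open>c > 0\<close> zs bound
      \<open>zs \<longlonglongrightarrow> l\<close>
    by blast
  obtain KA where KA: "\<And>x. nm (A x) \<le> KA * nm x"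
    using hbounded_bound[OF hbounded_A] by blast
  text \<open>Since \<open>(A - l) R(z\<^sub>k) v = v + (z\<^sub>k - l) R(z\<^sub>k) v\<close>, the limit \<open>x\<close> solves \<open>(A - l) x = v\<close>.\<close>
  have "nm (A x - sc l x - v)
      \<le> (KA + cmod l) * nm (resolvent (zs k) v - x) + cmod (zs k - l) * (c * nm v)" for k
  proof -
    define y where "y = resolvent (zs k) v"
    have "A x - sc l x - v = (A (x - y) - sc l (x - y)) + sc (zs k - l) y"
      using resolvent_right_inverse[OF zs, of k v]
      by (simp add: y_def linear_op_diff[OF linear_op_A] sc_simps algebra_simps)
    also have "nm \<dots> \<le> nm (A (x - y)) + nm (sc l (x - y)) + nm (sc (zs k - l) y)"
      using nm_triangle[of "A (x - y) - sc l (x - y)" "sc (zs k - l) y"] nm_diff_le[of "A (x - y)" "sc l (x - y)"]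
      by linarith
    also have "\<dots> \<le> (KA + cmod l) * nm (y - x) + cmod (zs k - l) * (c * nm v)"
      using KA[of "x - y"] mult_left_mono[OF bound[of k v], of "cmod (zs k - l)"]
      by (simp add: y_def nm_sc nm_minus_commute[of x] distrib_right)
    finally show ?thesis by (simp add: y_def)
  qed
  moreover have "(\<lambda>k. (KA + cmod l) * nm (resolvent (zs k) v - x) + cmod (zs k - l) * (c * nm v))
      \<longlonglongrightarrow> (KA + cmod l) * 0 + 0 * (c * nm v)"
    by (intro tendsto_add tendsto_mult tendsto_const x null)
  ultimately have "nm (A x - sc l x - v) \<le> 0"
    using LIMSEQ_le_const[of _ 0 "nm (A x - sc l x - v)"] by (metis (no_types, lifting) mult_zero_left
        mult_zero_right add.right_neutral)
  then show ?thesis by auto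
qed

lemma not_in_hspectrum_if_resolvent_bounded:
  assumes "c > 0" "0 < \<rho>" "\<rho> \<le> r0"
    and bound: "\<And>z v. z \<in> ball l \<rho> - {l} \<Longrightarrow> nm (resolvent z v) \<le> c * nm v"
  shows "l \<notin> hspectrum sc ip A"
proof (rule not_in_hspectrum_if_bounded_below_surj[OF linear_op_A _ surj_if_resolvent_bounded[OF assms]])
  define \<delta> where "\<delta> = min (\<rho> / 2) (1 / (2 * c))"
  have \<delta>: "0 < \<delta>" "\<delta> < \<rho>" "\<delta> \<le> 1 / (2 * c)" using assms by (auto simp: \<delta>_def)
  define z where "z = l + complex_of_real \<delta>"
  have "z \<in> ball l \<rho> - {l}" "cmod (l - z) \<le> 1 / (2 * c)"
    using \<delta> by (auto simp: z_def dist_norm)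
  then show "nm y \<le> 2 * c * nm (A y - sc l y)" for y
    using bounded_below_near_resolvent[OF _ \<open>c > 0\<close> bound] \<open>\<rho> \<le> r0\<close> by auto
qed

text \<open>If \<open>P = 0\<close>, then \<open>\<xi> \<mapsto> \<langle>R(\<xi>) R(z) v, w\<rangle>\<close> has no residue at \<open>l\<close>, so by the resolvent identity
  Cauchy's formula holds for \<open>\<langle>R(\<xi>) v, w\<rangle>\<close> as if it were holomorphic at \<open>l\<close>.\<close>
lemma Cauchy_formula_if_riesz_proj_zero:
  assumes P0: "\<And>u. riesz_proj u = 0" and r: "0 < r" "r < r0"
    and z: "z \<in> disc" "cmod (z - l) < r"
  shows "((\<lambda>\<xi>. resolvent_form v w \<xi> / (\<xi> - z)) has_contour_integral
      2 * pi * \<i> * resolvent_form v w z) (circlepath l r)"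
proof -
  have "(resolvent_form (resolvent z v) w has_contour_integral 0) (circlepath l r)"
    using resolvent_form_contour_integral[OF r, of "resolvent z v" w] by (simp add: riesz_form_eq_ip P0)
  moreover have "((\<lambda>\<xi>. resolvent_form v w z / (\<xi> - z)) has_contour_integral
      2 * of_real pi * \<i> * resolvent_form v w z) (circlepath l r)"
    using z(2) by (intro Cauchy_integral_circlepath_simple) auto
  ultimately have "((\<lambda>\<xi>. resolvent_form (resolvent z v) w \<xi> + resolvent_form v w z / (\<xi> - z))
      has_contour_integral 2 * pi * \<i> * resolvent_form v w z) (circlepath l r)"
    using has_contour_integral_add by fastforce
  then show ?thesis
  proof (rule has_contour_integral_eq)
    fix \<xi> assume "\<xi> \<in> path_image (circlepath l r)"
    then have "\<xi> \<in> disc" and "cmod (\<xi> - l) = r"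
      using circle_in_disc[OF r] r by (auto simp: dist_norm norm_minus_commute)
    then have "\<xi> \<noteq> z" using z by auto
    have "resolvent_form v w \<xi> = resolvent_form v w z + (\<xi> - z) * resolvent_form (resolvent z v) w \<xi>"
      using resolvent_identity[OF \<open>z \<in> disc\<close> \<open>\<xi> \<in> disc\<close>, of v] unfolding resolvent_form_def
      by (simp add: diff_eq_eq ip_add_left)
    then show "resolvent_form (resolvent z v) w \<xi> + resolvent_form v w z / (\<xi> - z)
        = resolvent_form v w \<xi> / (\<xi> - z)"
      using \<open>\<xi> \<noteq> z\<close> by (simp add: field_simps)
  qed
qed

lemma resolvent_bounded_if_riesz_proj_zero:
  assumes P0: "\<And>u. riesz_proj u = 0" and r: "0 < r" "r < r0" and "M \<ge> 0"
    and M: "\<And>\<xi> v. cmod (\<xi> - l) = r \<Longrightarrow> nm (resolvent \<xi> v) \<le> M * nm v"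
    and z: "z \<in> ball l (r / 2) - {l}"
  shows "nm (resolvent z v) \<le> 2 * M * nm v"
proof (rule nm_le_if_ip_le)
  show "0 \<le> 2 * M * nm v" using \<open>M \<ge> 0\<close> by simp
  fix w
  have "z \<in> disc" "cmod (z - l) < r / 2" using z r by (auto simp: dist_norm norm_minus_commute)
  have "cmod (2 * pi * \<i> * resolvent_form v w z) \<le> M * nm v * nm w / (r / 2) * (2 * pi * r)"
  proof (rule has_contour_integral_bound_circlepath[OF Cauchy_formula_if_riesz_proj_zero[OF P0 r]])
    fix \<xi> assume \<xi>: "cmod (\<xi> - l) = r"
    have "r / 2 \<le> cmod (\<xi> - z)"
      using norm_triangle_ineq2[of "\<xi> - l" "z - l"] \<xi> \<open>cmod (z - l) < r / 2\<close> by simp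
    then show "cmod (resolvent_form v w \<xi> / (\<xi> - z)) \<le> M * nm v * nm w / (r / 2)"
      unfolding norm_divide using resolvent_form_bound[OF M[OF \<xi>], of v w] r \<open>M \<ge> 0\<close>
      by (intro frac_le) auto
  qed (use r \<open>M \<ge> 0\<close> \<open>z \<in> disc\<close> \<open>cmod (z - l) < r / 2\<close> in auto)
  then show "cmod (ip (resolvent z v) w) \<le> 2 * M * nm v * nm w"
    using r by (simp add: norm_mult resolvent_form_def field_simps)
qed

lemma riesz_proj_nonzero:
  assumes "l \<in> hspectrum sc ip A"
  obtains u where "riesz_proj u \<noteq> 0"
proof (rule ccontr)
  assume "\<not> thesis"
  then have P0: "riesz_proj u = 0" for u using that by blast
  have r: "0 < r0 / 2" "r0 / 2 < r0" using r0_pos by auto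
  obtain M where M: "M > 0" "\<And>z v. cmod (z - l) = r0 / 2 \<Longrightarrow> nm (resolvent z v) \<le> M * nm v"
    using resolvent_bounded_on_circle[OF r] by blast
  have "l \<notin> hspectrum sc ip A"
    using resolvent_bounded_if_riesz_proj_zero[OF P0 r less_imp_le[OF M(1)] M(2)] M(1) r0_pos
    by (intro not_in_hspectrum_if_resolvent_bounded[of "2 * M" "r0 / 4"]) auto
  then show False using assms by blast
qed

section \<open>Eigenvectors in the range of the Riesz projection\<close>

text \<open>If \<open>p(l) \<noteq> 0\<close>, write \<open>p = p(l) + (z - l) S\<close>; then \<open>h = -(z - l) S / p(l)\<close> fixes \<open>P u\<close>,
  while \<open>h(A)\<^sup>k P u\<close> decays geometrically because \<open>h(l) = 0\<close>.\<close>
lemma riesz_proj_eq_0_if_annihilated: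
  assumes "poly_op p A (riesz_proj u) = 0" "poly p l \<noteq> 0"
  shows "riesz_proj u = 0"
proof -
  define x where "x = riesz_proj u"
  obtain S where S: "p - [:poly p l:] = [:- l, 1:] * S"
    using poly_eq_0_iff_dvd[of "p - [:poly p l:]" l] by (auto elim: dvdE)
  define h where "h = smult (- 1 / poly p l) ([:- l, 1:] * S)"
  have "poly_op (p - [:poly p l:]) A x = - sc (poly p l) x"
    using assms(1) by (simp add: x_def poly_op_diff[OF linear_op_A] poly_op_const[OF linear_op_A])
  then have "poly_op h A x = sc (- 1 / poly p l) (- sc (poly p l) x)"
    by (simp only: h_def poly_op_smult[OF linear_op_A] S)
  then have "poly_op h A x = x"
    using assms(2) by (simp add: sc_minus_right sc_minus_left)
  then have fixed: "poly_op (h ^ k) A x = x" for k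
    by (induction k) (simp_all add: poly_op_mult[OF linear_op_A] poly_op_const[OF linear_op_A]
        flip: pCons_one)
  obtain C where C: "\<And>k. nm (poly_op (h ^ k) A x) \<le> C * (1 / 2) ^ k"
    using nm_poly_op_power_riesz_proj_le[of h "1 / 2"] unfolding x_def by (auto simp: h_def)
  have "nm x * 2 ^ k \<le> C" for k
    using C[of k] fixed[of k] by (simp add: field_simps)
  then show ?thesis
    using nonpos_if_times_pow2_bounded[of "nm x" C] by (simp add: x_def)
qed

lemma heigenvalue_if_annihilates_riesz_proj:
  assumes "riesz_proj u \<noteq> 0" "poly_op G A (riesz_proj u) = 0" "G \<noteq> 0"
  shows "heigenvalue sc A l"
proof -
  obtain H where G: "G = [:- l, 1:] ^ order l G * H" and "\<not> [:- l, 1:] dvd H"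
    using order_decomp[OF assms(3)] by blast
  then have "poly H l \<noteq> 0" by (simp add: poly_eq_0_iff_dvd)
  define y where "y = poly_op H A (riesz_proj u)"
  have "y \<noteq> 0"
    using riesz_proj_eq_0_if_annihilated[OF _ \<open>poly H l \<noteq> 0\<close>] assms(1) by (auto simp: y_def)
  moreover have "poly_op ([:- l, 1:] ^ order l G) A y = 0"
    using assms(2) by (subst (asm) G) (simp add: y_def poly_op_mult[OF linear_op_A])
  ultimately show ?thesis
    by (rule heigenvalue_if_linear_factor_power_annihilates[OF linear_op_A])
qed

text \<open>If \<open>N = g(A)\<close> is normal and \<open>N x \<noteq> 0\<close> for \<open>x = P u\<close>, then \<open>\<parallel>N\<^sup>k x\<parallel>\<close> grows at least like \<open>q\<^sup>k\<close> with
  \<open>q = \<parallel>N x\<parallel> / \<parallel>x\<parallel>\<close>, but since \<open>g(l) = 0\<close> it also decays like \<open>(q/2)\<^sup>k\<close>.\<close>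
lemma normal_poly_op_annihilates_riesz_proj:
  assumes "poly g l = 0"
    and adj: "\<And>x y. ip (poly_op g A x) y = ip x (N' y)"
    and normal: "\<And>y. N' (poly_op g A y) = poly_op g A (N' y)"
  shows "poly_op g A (riesz_proj u) = 0"
proof (rule ccontr)
  define x where "x = riesz_proj u"
  assume "poly_op g A (riesz_proj u) \<noteq> 0"
  then have "poly_op g A x \<noteq> 0" by (simp add: x_def)
  then have "x \<noteq> 0" using adj[of x "poly_op g A x"] by auto
  define q where "q = nm (poly_op g A x) / nm x"
  have "q > 0" using \<open>x \<noteq> 0\<close> \<open>poly_op g A x \<noteq> 0\<close> by (simp add: q_def)
  obtain C where C: "\<And>k. nm (poly_op (g ^ k) A x) \<le> C * (q / 2) ^ k"
    using nm_poly_op_power_riesz_proj_le[OF assms(1), of "q / 2"] \<open>q > 0\<close> unfolding x_def by auto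
  have "q ^ k * nm x \<le> C * (q / 2) ^ k" for k
    using normal_op_funpow_lower_bound[OF adj normal \<open>poly_op g A x \<noteq> 0\<close>, of k] C[of k]
    by (simp add: q_def poly_op_power[OF linear_op_A])
  then have "nm x * 2 ^ k \<le> C" for k
    using \<open>q > 0\<close> by (simp add: power_divide field_simps)
  then show False
    using nonpos_if_times_pow2_bounded[of "nm x" C] \<open>x \<noteq> 0\<close> by simp
qed

lemma heigenvalue_if_normal_power:
  assumes "n > 0" and comm: "hadj ip A \<circ> (A ^^ n) = (A ^^ n) \<circ> hadj ip A"
    and "l \<in> hspectrum sc ip A"
  shows "heigenvalue sc A l"
proof -
  obtain u where "riesz_proj u \<noteq> 0"
    using riesz_proj_nonzero[OF \<open>l \<in> hspectrum sc ip A\<close>] by blast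
  define G where "G = [:0, 1:] ^ n - [:l ^ n:]"
  have G_op: "poly_op G A x = (A ^^ n) x - sc (l ^ n) x" for x
    by (simp add: G_def poly_op_diff poly_op_monomial_power poly_op_const linear_op_A)
  have "poly_op G A (riesz_proj u) = 0"
  proof (rule normal_poly_op_annihilates_riesz_proj[where N' = "\<lambda>y. (hadj ip A ^^ n) y - sc (cnj (l ^ n)) y"])
    show "poly G l = 0" by (simp add: G_def)
    show "ip (poly_op G A x) y = ip x ((hadj ip A ^^ n) y - sc (cnj (l ^ n)) y)" for x y
      unfolding G_op by (rule hadj_ip_funpow_minus_scalar[OF hbounded_A])
    show "(hadj ip A ^^ n) (poly_op G A y) - sc (cnj (l ^ n)) (poly_op G A y)
        = poly_op G A ((hadj ip A ^^ n) y - sc (cnj (l ^ n)) y)" for y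
      unfolding G_op by (rule normal_funpow_minus_scalar[OF hbounded_A comm])
  qed
  moreover have "G \<noteq> 0"
    unfolding G_def using \<open>n > 0\<close> by (rule monomial_power_minus_const_nonzero)
  ultimately show ?thesis
    using heigenvalue_if_annihilates_riesz_proj \<open>riesz_proj u \<noteq> 0\<close> by blast
qed

end

theorem corollary3p2:
  fixes sc :: "complex \<Rightarrow> 'a::ab_group_add \<Rightarrow> 'a"
    and ip :: "'a \<Rightarrow> 'a \<Rightarrow> complex"
    and A :: "'a \<Rightarrow> 'a"
    and n :: nat
  assumes "chilbert sc ip"
    and "hinfdim sc"
    and "n > 1"
    and "hbounded sc ip A"
    and "hadj ip A \<circ> (A ^^ n) = (A ^^ n) \<circ> hadj ip A"
  shows "isoloid sc ip A"
  unfolding isoloid_def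
proof (intro allI impI)
  fix l assume "l isolated_in hspectrum sc ip A"
  then obtain r0 where "r0 > 0" "\<And>z. z \<in> ball l r0 - {l} \<Longrightarrow> z \<notin> hspectrum sc ip A"
      and "l \<in> hspectrum sc ip A"
    unfolding isolated_in_def by (metis Diff_iff Int_iff insertI1 open_contains_ball subsetD)
  then interpret punctured_resolvent_disc sc ip A l r0
    using assms(1,4) by unfold_locales
  show "heigenvalue sc A l"
    using assms(3) by (intro heigenvalue_if_normal_power[OF _ assms(5) \<open>l \<in> hspectrum sc ip A\<close>]) simp
qed

end
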